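(* Let $c\ge 1$ be an integer and consider the equivalence relation on $S_n$ generated by the replacement partition of $S_{c+1}$ whose only nontrivial part is $\{x\in S_{c+1}: x_1=1\}$. Let $f(n)$ denote the number of equivalence classes in $S_n$ (with $f(0)=1$), and for positive integers $k,n$ let $g(k,n)$ be the number of classes in $S_n$ containing at least one $k$-squished permutation. Then $$f(n)=\begin{cases} n!, & n<c+1,\\ \displaystyle\sum_{j=1}^{n} f(j-1)\, g(1,n-j+1)\binom{n-1}{j-1}, & n\ge c+1.\end{cases}$$
   Context: Permutations are written in one-line notation as words. The order permutation (standardization) of a word $u$ of distinct positive integers of length $\ell$ is the unique $\pi\in S_\ell$ with $\pi_i<\pi_j$ iff $u_i<u_j$. The equivalence is generated by declaring $\phi\equiv\psi$ whenever $\phi=aub$ and $\psi=avb$ for words $a,b,u,v$ with $u,v$ of length $c+1$ whose order permutations both begin with $1$ (i.e., the first letter of $u$ is the smallest letter of $u$, and likewise for $v$). A permutation of $S_n$ is $k$-squished if for each $j\le k$, the letter $j$ occurs among the first $c(j-1)+1$ positions. *)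

theory Defs
  imports Main
begin

definition perms :: "nat \<Rightarrow> nat list set" where
  "perms n = {xs. distinct xs \<and> set xs = {1..n}}"

text \<open>The order permutation of a word u of distinct letters begins with 1
  iff the first letter of u is the smallest letter of u.\<close>
definition std_starts_with_one :: "nat list \<Rightarrow> bool" where
  "std_starts_with_one u \<longleftrightarrow> u \<noteq> [] \<and> (\<forall>x\<in>set u. hd u \<le> x)"

definition repl_step :: "nat \<Rightarrow> nat \<Rightarrow> (nat list \<times> nat list) set" where
  "repl_step c n = {(\<phi>, \<psi>). \<phi> \<in> perms n \<and> \<psi> \<in> perms n \<and>
     (\<exists>a u v b. \<phi> = a @ u @ b \<and> \<psi> = a @ v @ b \<and>
        length u = c + 1 \<and> length v = c + 1 \<and>
        std_starts_with_one u \<and> std_starts_with_one v)}"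

definition repl_equiv :: "nat \<Rightarrow> nat \<Rightarrow> (nat list \<times> nat list) set" where
  "repl_equiv c n = Id_on (perms n) \<union> (repl_step c n \<union> (repl_step c n)\<inverse>)\<^sup>+"

definition classes :: "nat \<Rightarrow> nat \<Rightarrow> nat list set set" where
  "classes c n = perms n // repl_equiv c n"

definition num_classes :: "nat \<Rightarrow> nat \<Rightarrow> nat" where
  "num_classes c n = card (classes c n)"

definition squished :: "nat \<Rightarrow> nat \<Rightarrow> nat list \<Rightarrow> bool" where
  "squished c k \<sigma> \<longleftrightarrow> (\<forall>j\<in>{1..k}. j \<in> set (take (c * (j - 1) + 1) \<sigma>))"

definition num_squished_classes :: "nat \<Rightarrow> nat \<Rightarrow> nat \<Rightarrow> nat" where
  "num_squished_classes c k n = card {C \<in> classes c n. \<exists>\<sigma>\<in>C. squished c k \<sigma>}"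

end

theory Submission
  imports Defs "HOL-Combinatorics.Multiset_Permutations" "HOL-Library.Infinite_Set"
begin

text \<open>Let m be the smallest letter. A window whose first letter is its smallest one can contain m
  only as its first letter, so no replacement moves m or exchanges letters across it: the class of
  \<open>\<alpha> m \<beta>\<close> consists of the words \<open>\<alpha>' m \<beta>'\<close> with \<open>\<alpha>'\<close> in the class of \<open>\<alpha>\<close> (over the letters of \<open>\<alpha>\<close>)
  and \<open>m \<beta>'\<close> in the class of \<open>m \<beta>\<close> (over the remaining letters), a class containing a word that starts
  with its minimum. Class counts depend only on the size of the alphabet (relabel order-preservingly),
  so summing over the set S of letters before m gives \<open>f(n) = \<Sum>\<^sub>S f(|S|) g(1, n - |S|)\<close>, which
  groups into the binomial sum. For n < c + 1 no window fits and every class is a singleton.\<close>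

section \<open>Replacement classes over an arbitrary alphabet\<close>

definition repl_step_on :: "nat \<Rightarrow> nat set \<Rightarrow> (nat list \<times> nat list) set" where
  "repl_step_on c A = {(\<phi>, \<psi>). \<phi> \<in> permutations_of_set A \<and> \<psi> \<in> permutations_of_set A \<and>
     (\<exists>a u v b. \<phi> = a @ u @ b \<and> \<psi> = a @ v @ b \<and>
        length u = c + 1 \<and> length v = c + 1 \<and>
        std_starts_with_one u \<and> std_starts_with_one v)}"

definition repl_equiv_on :: "nat \<Rightarrow> nat set \<Rightarrow> (nat list \<times> nat list) set" where
  "repl_equiv_on c A = Id_on (permutations_of_set A) \<union> (repl_step_on c A)\<^sup>+"

definition repl_classes_on :: "nat \<Rightarrow> nat set \<Rightarrow> nat list set set" where
  "repl_classes_on c A = permutations_of_set A // repl_equiv_on c A"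

definition min_first_classes_on :: "nat \<Rightarrow> nat set \<Rightarrow> nat list set set" where
  "min_first_classes_on c A = {C \<in> repl_classes_on c A. \<exists>\<sigma>\<in>C. std_starts_with_one \<sigma>}"

lemma repl_step_onI:
  assumes "distinct (a @ u @ b)" "distinct (a @ v @ b)" "set v = set u"
    and "length u = c + 1" "length v = c + 1" "std_starts_with_one u" "std_starts_with_one v"
  shows "(a @ u @ b, a @ v @ b) \<in> repl_step_on c (set (a @ u @ b))"
  using assms unfolding repl_step_on_def permutations_of_set_def by auto

lemma repl_step_onE:
  assumes "(x, y) \<in> repl_step_on c A"
  obtains a u v b where "x = a @ u @ b" "y = a @ v @ b" "length u = c + 1" "length v = c + 1"
    "std_starts_with_one u" "std_starts_with_one v" "set v = set u"
    "distinct (a @ u @ b)" "distinct (a @ v @ b)" "set (a @ u @ b) = A"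
proof -
  obtain a u v b where *: "x = a @ u @ b" "y = a @ v @ b" "length u = c + 1" "length v = c + 1"
      "std_starts_with_one u" "std_starts_with_one v"
    and x: "x \<in> permutations_of_set A" and y: "y \<in> permutations_of_set A"
    using assms unfolding repl_step_on_def by auto
  have "set u = A - set a - set b" "set v = A - set a - set b"
    using x y * by (auto simp: permutations_of_set_def Un_assoc)
  with * x y that show ?thesis by (auto simp: permutations_of_set_def Un_assoc)
qed

lemma repl_step_on_sym: "(x, y) \<in> repl_step_on c A \<Longrightarrow> (y, x) \<in> repl_step_on c A"
  unfolding repl_step_on_def by blast

lemma repl_step_on_subset: "repl_step_on c A \<subseteq> permutations_of_set A \<times> permutations_of_set A"
  unfolding repl_step_on_def by auto

lemma perms_eq_permutations_of_set: "perms n = permutations_of_set {1..n}"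
  by (auto simp: perms_def permutations_of_set_def)

lemma repl_equiv_eq_repl_equiv_on: "repl_equiv c n = repl_equiv_on c {1..n}"
proof -
  have "repl_step c n = repl_step_on c {1..n}"
    unfolding repl_step_def repl_step_on_def perms_eq_permutations_of_set ..
  moreover have "(repl_step_on c {1..n})\<inverse> = repl_step_on c {1..n}"
    by (auto dest: repl_step_on_sym)
  ultimately show ?thesis
    unfolding repl_equiv_def repl_equiv_on_def perms_eq_permutations_of_set by simp
qed

lemma equiv_repl_equiv_on: "equiv (permutations_of_set A) (repl_equiv_on c A)"
proof (rule equivI)
  have tr: "(repl_step_on c A)\<^sup>+ \<subseteq> permutations_of_set A \<times> permutations_of_set A"
    using repl_step_on_subset trancl_subset_Sigma by blast
  then show "repl_equiv_on c A \<subseteq> permutations_of_set A \<times> permutations_of_set A"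
    unfolding repl_equiv_on_def by auto
  show "refl_on (permutations_of_set A) (repl_equiv_on c A)"
    unfolding refl_on_def repl_equiv_on_def by auto
  have "sym ((repl_step_on c A)\<^sup>+)"
    by (rule sym_trancl) (auto simp: sym_def intro: repl_step_on_sym)
  then show "sym (repl_equiv_on c A)"
    unfolding repl_equiv_on_def sym_def by auto
  show "trans (repl_equiv_on c A)"
    unfolding repl_equiv_on_def trans_def by (auto intro: trancl_trans)
qed

lemma repl_equiv_on_refl: "x \<in> permutations_of_set A \<Longrightarrow> (x, x) \<in> repl_equiv_on c A"
  unfolding repl_equiv_on_def by auto

lemma repl_equiv_on_step: "(x, y) \<in> repl_step_on c A \<Longrightarrow> (x, y) \<in> repl_equiv_on c A"
  unfolding repl_equiv_on_def by auto

lemma repl_equiv_on_trans: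
  "(x, y) \<in> repl_equiv_on c A \<Longrightarrow> (y, z) \<in> repl_equiv_on c A \<Longrightarrow> (x, z) \<in> repl_equiv_on c A"
  using equiv_repl_equiv_on[of A c] unfolding equiv_def trans_def by blast

lemma repl_equiv_onD:
  "(x, y) \<in> repl_equiv_on c A \<Longrightarrow> x \<in> permutations_of_set A \<and> y \<in> permutations_of_set A"
  using equiv_repl_equiv_on[of A c] unfolding equiv_def refl_on_def by blast

lemma repl_equiv_on_map:
  assumes "\<And>x y. (x, y) \<in> repl_step_on c A \<Longrightarrow> (f x, f y) \<in> repl_step_on c B"
    and "\<And>x. x \<in> permutations_of_set A \<Longrightarrow> f x \<in> permutations_of_set B"
    and "(x, y) \<in> repl_equiv_on c A"
  shows "(f x, f y) \<in> repl_equiv_on c B"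
proof -
  have "(f x, f y) \<in> repl_equiv_on c B" if "(x, y) \<in> (repl_step_on c A)\<^sup>+"
    using that by induction (auto intro: repl_equiv_on_step repl_equiv_on_trans assms(1))
  then show ?thesis
    using assms(2,3) unfolding repl_equiv_on_def[of c A] by (auto intro: repl_equiv_on_refl)
qed

section \<open>Replacements never move the smallest letter\<close>

lemma std_starts_with_one_hd:
  assumes "std_starts_with_one u" "m \<in> set u" "\<forall>x\<in>set u. m \<le> x"
  shows "hd u = m"
  using assms hd_in_set unfolding std_starts_with_one_def by (metis order_antisym)

text \<open>A window straddling m would contain m without starting with it, although its first letter
  is its smallest one.\<close>

lemma window_not_across_min:
  assumes "a @ u @ b = \<alpha> @ m # \<beta>" "m \<notin> set \<alpha>"
    and "std_starts_with_one u" "\<forall>x\<in>set u. m \<le> x"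
  shows "(\<exists>a'. a = \<alpha> @ a' \<and> m # \<beta> = a' @ u @ b) \<or> (\<exists>b'. \<alpha> = a @ u @ b' \<and> b = b' @ m # \<beta>)"
proof -
  from assms(1) have "(a @ u) @ b = \<alpha> @ m # \<beta>" by simp
  then obtain us where
    "a @ u = \<alpha> @ us \<and> us @ b = m # \<beta> \<or> a @ u @ us = \<alpha> \<and> b = us @ m # \<beta>"
    unfolding append_eq_append_conv2 by auto
  then consider
      (inside_prefix) us where "a @ u @ us = \<alpha>" "b = us @ m # \<beta>"
    | (ends_prefix) "a @ u = \<alpha>" "b = m # \<beta>"
    | (past_prefix) us' where "a @ u = \<alpha> @ m # us'" "m # \<beta> = m # us' @ b"
    by (metis Cons_eq_append_conv append_Nil2)
  then show ?thesis
  proof cases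
    case (past_prefix us')
    then obtain ws where
      "a = \<alpha> @ ws \<and> ws @ u = m # us' \<or> a @ ws = \<alpha> \<and> u = ws @ m # us'"
      unfolding append_eq_append_conv2 by auto
    then show ?thesis
    proof
      assume "a @ ws = \<alpha> \<and> u = ws @ m # us'"
      moreover have "ws = []"
      proof (rule ccontr)
        assume "ws \<noteq> []"
        moreover have "hd u = m"
          using std_starts_with_one_hd assms(3,4) \<open>a @ ws = \<alpha> \<and> u = ws @ m # us'\<close> by simp
        ultimately show False
          using assms(2) \<open>a @ ws = \<alpha> \<and> u = ws @ m # us'\<close> by auto
      qed
      ultimately show ?thesis using past_prefix by auto
    qed (use past_prefix in auto)
  qed auto
qed

lemma repl_step_on_Cons_min:
  assumes "(m # \<beta>, z) \<in> repl_step_on c A" "\<forall>y\<in>A. m \<le> y"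
  shows "\<exists>\<beta>'. z = m # \<beta>'"
proof -
  obtain a u v b where x: "m # \<beta> = a @ u @ b" and z: "z = a @ v @ b" and "length u = c + 1"
      and "std_starts_with_one v" "set v = set u" "set (a @ u @ b) = A"
    using assms(1) by (elim repl_step_onE) auto
  show ?thesis
  proof (cases a)
    case Nil
    with x \<open>length u = c + 1\<close> have "m \<in> set v"
      using \<open>set v = set u\<close> by (cases u) auto
    then have "hd v = m"
      using std_starts_with_one_hd \<open>std_starts_with_one v\<close> assms(2) \<open>set v = set u\<close>
        \<open>set (a @ u @ b) = A\<close> by auto
    with \<open>m \<in> set v\<close> show ?thesis using z Nil by (cases v) auto
  qed (use x z in auto)
qed

lemma repl_step_on_split_at_min:
  assumes "(\<alpha> @ m # \<beta>, z) \<in> repl_step_on c A" "\<forall>y\<in>A. m \<le> y"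
  shows "\<exists>\<alpha>' \<beta>'. z = \<alpha>' @ m # \<beta>' \<and> (\<alpha>, \<alpha>') \<in> repl_equiv_on c (set \<alpha>)
            \<and> (m # \<beta>, m # \<beta>') \<in> repl_equiv_on c (set (m # \<beta>))"
proof -
  obtain a u v b where x: "\<alpha> @ m # \<beta> = a @ u @ b" and z: "z = a @ v @ b"
    and uv: "length u = c + 1" "length v = c + 1" "std_starts_with_one u" "std_starts_with_one v"
      "set v = set u"
    and d: "distinct (a @ u @ b)" "distinct (a @ v @ b)" and A: "set (a @ u @ b) = A"
    using assms(1) by (elim repl_step_onE) auto
  have "distinct (\<alpha> @ m # \<beta>)" using d x by simp
  then have "m \<notin> set \<alpha>" by simp
  moreover have "\<forall>y\<in>set u. m \<le> y" using assms(2) A by auto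
  ultimately consider
      (right) a' where "a = \<alpha> @ a'" "m # \<beta> = a' @ u @ b"
    | (left) b' where "\<alpha> = a @ u @ b'" "b = b' @ m # \<beta>"
    using window_not_across_min[OF x[symmetric]] uv(3) by blast
  then show ?thesis
  proof cases
    case right
    have step: "(a' @ u @ b, a' @ v @ b) \<in> repl_step_on c (set (a' @ u @ b))"
      using d uv right by (intro repl_step_onI) auto
    moreover have "\<forall>y\<in>set (a' @ u @ b). m \<le> y" using assms(2) A right by auto
    ultimately obtain \<beta>' where "a' @ v @ b = m # \<beta>'"
      using repl_step_on_Cons_min right(2) by metis
    moreover have "(\<alpha>, \<alpha>) \<in> repl_equiv_on c (set \<alpha>)"
      using \<open>distinct (\<alpha> @ m # \<beta>)\<close> by (intro repl_equiv_on_refl) auto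
    ultimately show ?thesis
      using step right z by (metis append.assoc repl_equiv_on_step)
  next
    case left
    have "(a @ u @ b', a @ v @ b') \<in> repl_step_on c (set (a @ u @ b'))"
      using d uv left by (intro repl_step_onI) auto
    moreover have "(m # \<beta>, m # \<beta>) \<in> repl_equiv_on c (set (m # \<beta>))"
      using \<open>distinct (\<alpha> @ m # \<beta>)\<close> by (intro repl_equiv_on_refl) auto
    ultimately show ?thesis
      using left z by (metis append.assoc repl_equiv_on_step)
  qed
qed

lemma repl_equiv_on_split_at_min:
  assumes "(\<alpha> @ m # \<beta>, z) \<in> repl_equiv_on c A" "\<forall>y\<in>A. m \<le> y"
  shows "\<exists>\<alpha>' \<beta>'. z = \<alpha>' @ m # \<beta>' \<and> (\<alpha>, \<alpha>') \<in> repl_equiv_on c (set \<alpha>)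
            \<and> (m # \<beta>, m # \<beta>') \<in> repl_equiv_on c (set (m # \<beta>))"
proof -
  have "\<exists>\<alpha>' \<beta>'. z = \<alpha>' @ m # \<beta>' \<and> (\<alpha>, \<alpha>') \<in> repl_equiv_on c (set \<alpha>)
          \<and> (m # \<beta>, m # \<beta>') \<in> repl_equiv_on c (set (m # \<beta>))"
    if "(\<alpha> @ m # \<beta>, z) \<in> (repl_step_on c A)\<^sup>+"
    using that
  proof (induction rule: trancl_induct)
    case (base z)
    then show ?case using repl_step_on_split_at_min assms(2) by blast
  next
    case (step y z)
    then obtain \<alpha>' \<beta>' where y: "y = \<alpha>' @ m # \<beta>'"
      and \<alpha>': "(\<alpha>, \<alpha>') \<in> repl_equiv_on c (set \<alpha>)"
      and \<beta>': "(m # \<beta>, m # \<beta>') \<in> repl_equiv_on c (set (m # \<beta>))" by blast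
    obtain \<alpha>'' \<beta>'' where z: "z = \<alpha>'' @ m # \<beta>''"
      and \<alpha>'': "(\<alpha>', \<alpha>'') \<in> repl_equiv_on c (set \<alpha>')"
      and \<beta>'': "(m # \<beta>', m # \<beta>'') \<in> repl_equiv_on c (set (m # \<beta>'))"
      using repl_step_on_split_at_min[OF step.hyps(2)[unfolded y] assms(2)] by blast
    have "set \<alpha>' = set \<alpha>" "set (m # \<beta>') = set (m # \<beta>)"
      using repl_equiv_onD[OF \<alpha>'] repl_equiv_onD[OF \<beta>'] by (metis permutations_of_setD(1))+
    then show ?case using z \<alpha>' \<beta>' \<alpha>'' \<beta>'' repl_equiv_on_trans by metis
  qed
  moreover have "(\<alpha>, \<alpha>) \<in> repl_equiv_on c (set \<alpha>)" "(m # \<beta>, m # \<beta>) \<in> repl_equiv_on c (set (m # \<beta>))"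
    using repl_equiv_onD[OF assms(1)] by (auto intro!: repl_equiv_on_refl simp: permutations_of_set_def)
  ultimately show ?thesis
    using assms(1) unfolding repl_equiv_on_def[of c A] by blast
qed

lemma repl_equiv_on_Cons_min:
  assumes "(m # \<beta>, z) \<in> repl_equiv_on c A" "\<forall>y\<in>A. m \<le> y"
  shows "\<exists>\<beta>'. z = m # \<beta>'"
proof -
  obtain \<alpha>' \<beta>' where "z = \<alpha>' @ m # \<beta>'" "([], \<alpha>') \<in> repl_equiv_on c {}"
    using repl_equiv_on_split_at_min[of "[]" m \<beta> z c A] assms by auto
  moreover have "\<alpha>' = []"
    using repl_equiv_onD[OF \<open>([], \<alpha>') \<in> _\<close>] by simp
  ultimately show ?thesis by simp
qed

lemma repl_step_on_append_right:
  assumes "(x, y) \<in> repl_step_on c A" "\<gamma> \<in> permutations_of_set B" "A \<inter> B = {}"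
  shows "(x @ \<gamma>, y @ \<gamma>) \<in> repl_step_on c (A \<union> B)"
proof -
  obtain a u v b where x: "x = a @ u @ b" and y: "y = a @ v @ b" and "length u = c + 1" "length v = c + 1"
    "std_starts_with_one u" "std_starts_with_one v" "set v = set u"
    "distinct (a @ u @ b)" "distinct (a @ v @ b)" "set (a @ u @ b) = A"
    using assms(1) by (elim repl_step_onE)
  moreover from this assms(2,3) have "distinct (a @ u @ b @ \<gamma>)" "distinct (a @ v @ b @ \<gamma>)"
    "set (a @ u @ b @ \<gamma>) = A \<union> B"
    by (auto simp: permutations_of_set_def)
  ultimately show ?thesis
    using repl_step_onI[of a u "b @ \<gamma>" v c] by (simp only: append_assoc)
qed

lemma repl_step_on_append_left:
  assumes "(x, y) \<in> repl_step_on c B" "\<alpha> \<in> permutations_of_set A" "A \<inter> B = {}"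
  shows "(\<alpha> @ x, \<alpha> @ y) \<in> repl_step_on c (A \<union> B)"
proof -
  obtain a u v b where x: "x = a @ u @ b" and y: "y = a @ v @ b" and "length u = c + 1" "length v = c + 1"
    "std_starts_with_one u" "std_starts_with_one v" "set v = set u"
    "distinct (a @ u @ b)" "distinct (a @ v @ b)" "set (a @ u @ b) = B"
    using assms(1) by (elim repl_step_onE)
  moreover from this assms(2,3) have "distinct ((\<alpha> @ a) @ u @ b)" "distinct ((\<alpha> @ a) @ v @ b)"
    "set ((\<alpha> @ a) @ u @ b) = A \<union> B"
    by (auto simp: permutations_of_set_def)
  ultimately show ?thesis
    using repl_step_onI[of "\<alpha> @ a" u b v c] by (simp only: append_assoc)
qed

lemma repl_equiv_on_append:
  assumes "(\<alpha>, \<alpha>') \<in> repl_equiv_on c A" "(\<gamma>, \<gamma>') \<in> repl_equiv_on c B" "A \<inter> B = {}"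
  shows "(\<alpha> @ \<gamma>, \<alpha>' @ \<gamma>') \<in> repl_equiv_on c (A \<union> B)"
proof -
  have \<gamma>: "\<gamma> \<in> permutations_of_set B" and \<alpha>': "\<alpha>' \<in> permutations_of_set A"
    using assms repl_equiv_onD by auto
  have "(\<alpha> @ \<gamma>, \<alpha>' @ \<gamma>) \<in> repl_equiv_on c (A \<union> B)"
    by (rule repl_equiv_on_map[OF repl_step_on_append_right[OF _ \<gamma> assms(3)] _ assms(1)])
      (use \<gamma> assms(3) in \<open>auto simp: permutations_of_set_def\<close>)
  moreover have "(\<alpha>' @ \<gamma>, \<alpha>' @ \<gamma>') \<in> repl_equiv_on c (A \<union> B)"
    by (rule repl_equiv_on_map[OF repl_step_on_append_left[OF _ \<alpha>' assms(3)] _ assms(2)])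
      (use \<alpha>' assms(3) in \<open>auto simp: permutations_of_set_def\<close>)
  ultimately show ?thesis by (rule repl_equiv_on_trans)
qed

section \<open>Classes split at the smallest letter\<close>

definition append_sets :: "'a list set \<Rightarrow> 'a list set \<Rightarrow> 'a list set" where
  "append_sets X Y = (\<lambda>(x, y). x @ y) ` (X \<times> Y)"

lemma repl_class_split_at_min:
  assumes "\<forall>y\<in>A. m \<le> y" "\<alpha> \<in> permutations_of_set S" "S \<subseteq> A - {m}"
    and "m # \<beta> \<in> permutations_of_set (A - S)"
  shows "repl_equiv_on c A `` {\<alpha> @ m # \<beta>}
    = append_sets (repl_equiv_on c S `` {\<alpha>}) (repl_equiv_on c (A - S) `` {m # \<beta>})"
  unfolding append_sets_def
proof (intro equalityI subsetI)
  fix z assume "z \<in> repl_equiv_on c A `` {\<alpha> @ m # \<beta>}"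
  then obtain \<alpha>' \<beta>' where "z = \<alpha>' @ m # \<beta>'" "(\<alpha>, \<alpha>') \<in> repl_equiv_on c (set \<alpha>)"
    "(m # \<beta>, m # \<beta>') \<in> repl_equiv_on c (set (m # \<beta>))"
    using repl_equiv_on_split_at_min assms(1) by blast
  moreover have "set \<alpha> = S" "set (m # \<beta>) = A - S"
    using assms(2,4) by (metis permutations_of_setD(1))+
  ultimately show "z \<in> (\<lambda>(x, y). x @ y) ` (repl_equiv_on c S `` {\<alpha>} \<times> repl_equiv_on c (A - S) `` {m # \<beta>})"
    by (intro image_eqI[of _ _ "(\<alpha>', m # \<beta>')"]) auto
next
  fix z assume "z \<in> (\<lambda>(x, y). x @ y) ` (repl_equiv_on c S `` {\<alpha>} \<times> repl_equiv_on c (A - S) `` {m # \<beta>})"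
  then obtain x y where "z = x @ y" "(\<alpha>, x) \<in> repl_equiv_on c S" "(m # \<beta>, y) \<in> repl_equiv_on c (A - S)"
    by auto
  moreover have "S \<union> (A - S) = A" using assms(3) by auto
  ultimately show "z \<in> repl_equiv_on c A `` {\<alpha> @ m # \<beta>}"
    using repl_equiv_on_append[of \<alpha> x c S "m # \<beta>" y "A - S"] by auto
qed

lemma finite_repl_classes_on: "finite (repl_classes_on c A)"
  unfolding repl_classes_on_def
  by (rule finite_quotient[OF finite_permutations_of_set equiv_type[OF equiv_repl_equiv_on]])

lemma finite_min_first_classes_on: "finite (min_first_classes_on c A)"
  using finite_repl_classes_on unfolding min_first_classes_on_def by simp

lemma quotient_eq_class_of_mem:
  assumes "equiv A r" "X \<in> A // r" "x \<in> X"
  shows "X = r `` {x}"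
proof -
  obtain a where "X = r `` {a}" using assms(2) by (rule quotientE)
  with assms(1,3) show ?thesis using equiv_class_eq by fastforce
qed

lemma repl_class_nonempty: "C \<in> repl_classes_on c A \<Longrightarrow> C \<noteq> {}"
  unfolding repl_classes_on_def by (rule in_quotient_imp_non_empty[OF equiv_repl_equiv_on])

lemma set_of_mem_repl_class: "C \<in> repl_classes_on c A \<Longrightarrow> \<sigma> \<in> C \<Longrightarrow> set \<sigma> = A"
  using in_quotient_imp_subset[OF equiv_repl_equiv_on] unfolding repl_classes_on_def
  by (blast dest: permutations_of_setD)

lemma min_first_class_repr:
  assumes "C \<in> min_first_classes_on c T" "m \<in> T" "\<forall>y\<in>T. m \<le> y"
  obtains \<beta> where "m # \<beta> \<in> permutations_of_set T" "C = repl_equiv_on c T `` {m # \<beta>}"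
proof -
  obtain \<sigma> where \<sigma>: "\<sigma> \<in> C" "std_starts_with_one \<sigma>" and C: "C \<in> repl_classes_on c T"
    using assms(1) unfolding min_first_classes_on_def by auto
  have "C = repl_equiv_on c T `` {\<sigma>}"
    using quotient_eq_class_of_mem[OF equiv_repl_equiv_on] C \<sigma>(1) unfolding repl_classes_on_def .
  moreover have "\<sigma> \<in> permutations_of_set T"
    using in_quotient_imp_subset[OF equiv_repl_equiv_on] C \<sigma>(1) unfolding repl_classes_on_def by blast
  moreover have "hd \<sigma> = m"
    using std_starts_with_one_hd[OF \<sigma>(2)] assms(2,3) \<open>\<sigma> \<in> permutations_of_set T\<close>
    by (simp add: permutations_of_set_def)
  moreover have "\<sigma> \<noteq> []" using \<sigma>(2) by (simp add: std_starts_with_one_def)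
  ultimately show ?thesis using that by (cases \<sigma>) auto
qed

lemma min_first_class_subset_Cons:
  assumes "C \<in> min_first_classes_on c T" "m \<in> T" "\<forall>y\<in>T. m \<le> y"
  shows "C \<subseteq> range (Cons m)"
proof
  fix \<sigma> assume "\<sigma> \<in> C"
  obtain \<beta> where "C = repl_equiv_on c T `` {m # \<beta>}" by (rule min_first_class_repr[OF assms])
  with \<open>\<sigma> \<in> C\<close> have "(m # \<beta>, \<sigma>) \<in> repl_equiv_on c T" by simp
  then obtain \<beta>' where "\<sigma> = m # \<beta>'" using repl_equiv_on_Cons_min assms(3) by blast
  then show "\<sigma> \<in> range (Cons m)" by simp
qed

lemma append_sets_repl_classes_on:
  assumes "\<forall>y\<in>A. m \<le> y" "m \<in> A" "S \<subseteq> A - {m}"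
    and "C\<^sub>1 \<in> repl_classes_on c S" "C\<^sub>2 \<in> min_first_classes_on c (A - S)"
  shows "append_sets C\<^sub>1 C\<^sub>2 \<in> repl_classes_on c A"
proof -
  obtain \<alpha> where \<alpha>: "\<alpha> \<in> permutations_of_set S" "C\<^sub>1 = repl_equiv_on c S `` {\<alpha>}"
    using assms(4) unfolding repl_classes_on_def by (elim quotientE) auto
  have "m \<in> A - S" "\<forall>y\<in>A - S. m \<le> y" using assms(1-3) by auto
  then obtain \<beta> where \<beta>: "m # \<beta> \<in> permutations_of_set (A - S)"
    "C\<^sub>2 = repl_equiv_on c (A - S) `` {m # \<beta>}"
    by (rule min_first_class_repr[OF assms(5)])
  have "\<alpha> @ m # \<beta> \<in> permutations_of_set A"
    using \<alpha>(1) \<beta>(1) assms(3) by (auto simp: permutations_of_set_def)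
  moreover have "append_sets C\<^sub>1 C\<^sub>2 = repl_equiv_on c A `` {\<alpha> @ m # \<beta>}"
    using repl_class_split_at_min[OF assms(1) \<alpha>(1) assms(3) \<beta>(1)] \<alpha>(2) \<beta>(2) by simp
  ultimately show ?thesis unfolding repl_classes_on_def by (simp add: quotientI)
qed

lemma repl_class_eq_append_sets:
  assumes "\<forall>y\<in>A. m \<le> y" "m \<in> A" "C \<in> repl_classes_on c A"
  obtains S C\<^sub>1 C\<^sub>2 where "S \<subseteq> A - {m}" "C\<^sub>1 \<in> repl_classes_on c S"
    "C\<^sub>2 \<in> min_first_classes_on c (A - S)" "C = append_sets C\<^sub>1 C\<^sub>2"
proof -
  obtain x where x: "x \<in> permutations_of_set A" "C = repl_equiv_on c A `` {x}"
    using assms(3) unfolding repl_classes_on_def by (elim quotientE) auto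
  then have "m \<in> set x" using assms(2) by (simp add: permutations_of_set_def)
  then obtain \<alpha> \<beta> where x_split: "x = \<alpha> @ m # \<beta>" by (meson split_list)
  define S where "S = set \<alpha>"
  have \<alpha>: "\<alpha> \<in> permutations_of_set S" and S: "S \<subseteq> A - {m}"
    and \<beta>: "m # \<beta> \<in> permutations_of_set (A - S)"
    using x(1) x_split by (auto simp: permutations_of_set_def S_def)
  have "std_starts_with_one (m # \<beta>)"
    using \<beta> assms(1) by (auto simp: std_starts_with_one_def permutations_of_set_def)
  then have "repl_equiv_on c (A - S) `` {m # \<beta>} \<in> min_first_classes_on c (A - S)"
    using \<beta> equiv_class_self[OF equiv_repl_equiv_on \<beta>]
    unfolding min_first_classes_on_def repl_classes_on_def by (auto intro: quotientI)
  moreover have "repl_equiv_on c S `` {\<alpha>} \<in> repl_classes_on c S"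
    using \<alpha> unfolding repl_classes_on_def by (rule quotientI)
  moreover have "C = append_sets (repl_equiv_on c S `` {\<alpha>}) (repl_equiv_on c (A - S) `` {m # \<beta>})"
    using repl_class_split_at_min[OF assms(1) \<alpha> S \<beta>] x x_split by simp
  ultimately show ?thesis using S that by blast
qed

lemma takeWhile_neq_append_Cons: "m \<notin> set xs \<Longrightarrow> takeWhile (\<lambda>z. z \<noteq> m) (xs @ m # ys) = xs"
  by (induction xs) auto

lemma dropWhile_neq_append_Cons: "m \<notin> set xs \<Longrightarrow> dropWhile (\<lambda>z. z \<noteq> m) (xs @ m # ys) = m # ys"
  by (induction xs) auto

lemma append_sets_split_at:
  assumes "X \<noteq> {}" "Y \<noteq> {}" "\<forall>x\<in>X. m \<notin> set x" "Y \<subseteq> range (Cons m)"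
  shows "takeWhile (\<lambda>z. z \<noteq> m) ` append_sets X Y = X"
    and "dropWhile (\<lambda>z. z \<noteq> m) ` append_sets X Y = Y"
proof -
  have "takeWhile (\<lambda>z. z \<noteq> m) ` append_sets X Y = fst ` (X \<times> Y)"
    unfolding append_sets_def image_image
    by (rule image_cong[OF refl]) (use assms(3,4) in \<open>auto simp: takeWhile_neq_append_Cons\<close>)
  with assms(2) show "takeWhile (\<lambda>z. z \<noteq> m) ` append_sets X Y = X" by simp
  have "dropWhile (\<lambda>z. z \<noteq> m) ` append_sets X Y = snd ` (X \<times> Y)"
    unfolding append_sets_def image_image
    by (rule image_cong[OF refl]) (use assms(3,4) in \<open>auto simp: dropWhile_neq_append_Cons\<close>)
  with assms(1) show "dropWhile (\<lambda>z. z \<noteq> m) ` append_sets X Y = Y" by simp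
qed

text \<open>Splitting every word at its smallest letter m is a bijection between the classes over A and
  the triples (set of letters before m, class of the part before m, class of the part from m on).\<close>

lemma card_repl_classes_on_split_at_min:
  assumes "finite A" "m \<in> A" "\<forall>y\<in>A. m \<le> y"
  shows "card (repl_classes_on c A) =
    (\<Sum>S\<in>Pow (A - {m}). card (repl_classes_on c S) * card (min_first_classes_on c (A - S)))"
proof -
  define Sig where
    "Sig = (SIGMA S:Pow (A - {m}). repl_classes_on c S \<times> min_first_classes_on c (A - S))"
  define join :: "nat set \<times> nat list set \<times> nat list set \<Rightarrow> nat list set"
    where "join = (\<lambda>(S, C\<^sub>1, C\<^sub>2). append_sets C\<^sub>1 C\<^sub>2)"
  have "inj_on join Sig"
  proof (rule inj_on_inverseI)
    fix p assume "p \<in> Sig"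
    then obtain S C\<^sub>1 C\<^sub>2 where p: "p = (S, C\<^sub>1, C\<^sub>2)" and S: "S \<subseteq> A - {m}"
      and C\<^sub>1: "C\<^sub>1 \<in> repl_classes_on c S" and C\<^sub>2: "C\<^sub>2 \<in> min_first_classes_on c (A - S)"
      unfolding Sig_def by auto
    have "m \<in> A - S" "\<forall>y\<in>A - S. m \<le> y" using assms(2,3) S by auto
    then have "C\<^sub>2 \<subseteq> range (Cons m)" by (rule min_first_class_subset_Cons[OF C\<^sub>2])
    moreover have "C\<^sub>1 \<noteq> {}" "C\<^sub>2 \<noteq> {}"
      using repl_class_nonempty C\<^sub>1 C\<^sub>2 unfolding min_first_classes_on_def by auto
    moreover have "\<forall>x\<in>C\<^sub>1. m \<notin> set x" using set_of_mem_repl_class[OF C\<^sub>1] S by auto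
    ultimately show "(\<lambda>D. (\<Union>(set ` takeWhile (\<lambda>z. z \<noteq> m) ` D),
        takeWhile (\<lambda>z. z \<noteq> m) ` D, dropWhile (\<lambda>z. z \<noteq> m) ` D)) (join p) = p"
      using set_of_mem_repl_class[OF C\<^sub>1] repl_class_nonempty[OF C\<^sub>1]
      unfolding p join_def by (simp add: append_sets_split_at)
  qed
  moreover have "join ` Sig = repl_classes_on c A"
  proof
    show "join ` Sig \<subseteq> repl_classes_on c A"
      using append_sets_repl_classes_on[OF assms(3,2)] unfolding join_def Sig_def by auto
    show "repl_classes_on c A \<subseteq> join ` Sig"
    proof
      fix C assume "C \<in> repl_classes_on c A"
      then obtain S C\<^sub>1 C\<^sub>2 where "S \<subseteq> A - {m}" "C\<^sub>1 \<in> repl_classes_on c S"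
        "C\<^sub>2 \<in> min_first_classes_on c (A - S)" "C = append_sets C\<^sub>1 C\<^sub>2"
        by (rule repl_class_eq_append_sets[OF assms(3,2)])
      then show "C \<in> join ` Sig"
        unfolding join_def Sig_def by (intro image_eqI[of _ _ "(S, C\<^sub>1, C\<^sub>2)"]) auto
    qed
  qed
  ultimately have "card (repl_classes_on c A) = card Sig"
    by (metis card_image)
  also have "\<dots> = (\<Sum>S\<in>Pow (A - {m}). card (repl_classes_on c S \<times> min_first_classes_on c (A - S)))"
    unfolding Sig_def using assms(1) finite_repl_classes_on finite_min_first_classes_on
    by (intro card_SigmaI) auto
  finally show ?thesis by (simp add: card_cartesian_product)
qed

section \<open>Order-preserving relabelling\<close>

lemma bij_betw_image_quotient:
  assumes f: "bij_betw f X Y" and R: "equiv X R" and S: "equiv Y S"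
    and RS: "\<And>x y. x \<in> X \<Longrightarrow> y \<in> X \<Longrightarrow> (f x, f y) \<in> S \<longleftrightarrow> (x, y) \<in> R"
  shows "bij_betw (image f) (X // R) (Y // S)"
proof (rule bij_betw_imageI)
  have class_image: "f ` (R `` {x}) = S `` {f x}" if "x \<in> X" for x
  proof
    show "f ` (R `` {x}) \<subseteq> S `` {f x}"
      using RS that equiv_type[OF R] by blast
    show "S `` {f x} \<subseteq> f ` (R `` {x})"
    proof
      fix w assume "w \<in> S `` {f x}"
      moreover from this have "w \<in> f ` X"
        using equiv_type[OF S] bij_betw_imp_surj_on[OF f] by blast
      ultimately show "w \<in> f ` (R `` {x})" using RS that by auto
    qed
  qed
  show "inj_on (image f) (X // R)"
    using inj_on_image_eq_iff[OF bij_betw_imp_inj_on[OF f]] in_quotient_imp_subset[OF R]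
    by (intro inj_onI) metis
  have "image f ` (X // R) = (\<Union>x\<in>X. {S `` {f x}})"
    unfolding quotient_def using class_image by auto
  also have "\<dots> = Y // S"
    unfolding quotient_def using bij_betw_imp_surj_on[OF f] by auto
  finally show "image f ` (X // R) = Y // S" .
qed

lemma strict_mono_on_inv_into:
  fixes h :: "'a::linorder \<Rightarrow> 'b::linorder"
  assumes "strict_mono_on A h"
  shows "strict_mono_on (h ` A) (inv_into A h)"
proof (rule strict_mono_onI)
  fix p q assume "p \<in> h ` A" "q \<in> h ` A" "p < q"
  then obtain x y where xy: "x \<in> A" "y \<in> A" "p = h x" "q = h y" by blast
  have "inj_on h A" using assms by (rule strict_mono_on_imp_inj_on)
  then have "inv_into A h p = x" "inv_into A h q = y" using xy by (simp_all add: inv_into_f_f)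
  moreover have "x < y" using strict_mono_on_less[OF assms xy(1,2)] xy \<open>p < q\<close> by simp
  ultimately show "inv_into A h p < inv_into A h q" by simp
qed

lemma std_starts_with_one_map_strict_mono:
  assumes "strict_mono_on A h" "set u \<subseteq> A"
  shows "std_starts_with_one (map h u) \<longleftrightarrow> std_starts_with_one u"
  using assms strict_mono_on_less_eq[OF assms(1)]
  by (cases u) (auto simp: std_starts_with_one_def)

lemma repl_step_on_map_strict_mono:
  assumes "strict_mono_on A h" "(x, y) \<in> repl_step_on c A"
  shows "(map h x, map h y) \<in> repl_step_on c (h ` A)"
proof -
  obtain a u v b where xy: "x = a @ u @ b" "y = a @ v @ b" and uv: "length u = c + 1" "length v = c + 1"
    "std_starts_with_one u" "std_starts_with_one v" "set v = set u"
    and d: "distinct (a @ u @ b)" "distinct (a @ v @ b)" and A: "set (a @ u @ b) = A"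
    using assms(2) by (elim repl_step_onE)
  have "inj_on h A" using assms(1) by (rule strict_mono_on_imp_inj_on)
  moreover have "set (a @ v @ b) = A" using A uv(5) by simp
  ultimately have "distinct (map h (a @ u @ b))" "distinct (map h (a @ v @ b))"
    using d A by (simp_all only: distinct_map)
  moreover have "std_starts_with_one (map h u)" "std_starts_with_one (map h v)"
    using uv A std_starts_with_one_map_strict_mono[OF assms(1)] by auto
  moreover have "set (map h v) = set (map h u)" "set (map h (a @ u @ b)) = h ` A"
    using uv(5) A by (simp, simp only: set_map)
  ultimately show ?thesis
    using repl_step_onI[of "map h a" "map h u" "map h b" "map h v" c] uv(1,2) xy
    by (simp only: map_append length_map)
qed

lemma repl_equiv_on_map_strict_mono:
  assumes "strict_mono_on A h" "(x, y) \<in> repl_equiv_on c A"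
  shows "(map h x, map h y) \<in> repl_equiv_on c (h ` A)"
proof (rule repl_equiv_on_map[OF repl_step_on_map_strict_mono[OF assms(1)] _ assms(2)])
  fix z assume "z \<in> permutations_of_set A"
  then show "map h z \<in> permutations_of_set (h ` A)"
    using permutations_of_set_image_inj[OF strict_mono_on_imp_inj_on[OF assms(1)]] by blast
qed

lemma repl_equiv_on_map_strict_mono_iff:
  assumes "strict_mono_on A h" "x \<in> permutations_of_set A" "y \<in> permutations_of_set A"
  shows "(map h x, map h y) \<in> repl_equiv_on c (h ` A) \<longleftrightarrow> (x, y) \<in> repl_equiv_on c A"
proof
  assume "(map h x, map h y) \<in> repl_equiv_on c (h ` A)"
  then have "(map (inv_into A h) (map h x), map (inv_into A h) (map h y))
      \<in> repl_equiv_on c (inv_into A h ` h ` A)"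
    by (rule repl_equiv_on_map_strict_mono[OF strict_mono_on_inv_into[OF assms(1)]])
  moreover have "inj_on h A" using assms(1) by (rule strict_mono_on_imp_inj_on)
  then have "map (inv_into A h) (map h z) = z" if "z \<in> permutations_of_set A" for z
    using that by (auto simp: permutations_of_set_def intro: map_idI)
  moreover have "inv_into A h ` h ` A = A" using \<open>inj_on h A\<close> by simp
  ultimately show "(x, y) \<in> repl_equiv_on c A" using assms(2,3) by simp
qed (rule repl_equiv_on_map_strict_mono[OF assms(1)])

lemma bij_betw_repl_classes_on_strict_mono:
  assumes "strict_mono_on A h"
  shows "bij_betw (image (map h)) (repl_classes_on c A) (repl_classes_on c (h ` A))"
proof -
  have "inj_on h A" using assms by (rule strict_mono_on_imp_inj_on)
  then have "inj_on (map h) (permutations_of_set A)"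
    by (intro inj_on_mapI) (auto simp: permutations_of_set_def intro: inj_on_subset)
  then have "bij_betw (map h) (permutations_of_set A) (permutations_of_set (h ` A))"
    by (simp add: bij_betw_def permutations_of_set_image_inj[OF \<open>inj_on h A\<close>])
  then show ?thesis
    unfolding repl_classes_on_def
    by (rule bij_betw_image_quotient[OF _ equiv_repl_equiv_on equiv_repl_equiv_on])
      (rule repl_equiv_on_map_strict_mono_iff[OF assms])
qed

lemma card_classes_strict_mono_image:
  assumes "strict_mono_on A h"
  shows "card (repl_classes_on c (h ` A)) = card (repl_classes_on c A)"
    and "card (min_first_classes_on c (h ` A)) = card (min_first_classes_on c A)"
proof -
  note bij = bij_betw_repl_classes_on_strict_mono[OF assms, of c]
  then show "card (repl_classes_on c (h ` A)) = card (repl_classes_on c A)"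
    by (simp add: bij_betw_same_card)
  have "(\<exists>\<tau>\<in>map h ` C. std_starts_with_one \<tau>) \<longleftrightarrow> (\<exists>\<sigma>\<in>C. std_starts_with_one \<sigma>)"
    if "C \<in> repl_classes_on c A" for C
    using set_of_mem_repl_class[OF that] std_starts_with_one_map_strict_mono[OF assms] by auto
  then have "{C \<in> repl_classes_on c A. \<exists>\<tau>\<in>map h ` C. std_starts_with_one \<tau>}
      = min_first_classes_on c A"
    unfolding min_first_classes_on_def by blast
  moreover have "min_first_classes_on c (h ` A)
      = image (map h) ` {C \<in> repl_classes_on c A. \<exists>\<tau>\<in>map h ` C. std_starts_with_one \<tau>}"
    unfolding min_first_classes_on_def bij_betw_imp_surj_on[OF bij, symmetric] by blast
  ultimately have "min_first_classes_on c (h ` A) = image (map h) ` min_first_classes_on c A"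
    by simp
  moreover have "inj_on (image (map h)) (min_first_classes_on c A)"
    using bij_betw_imp_inj_on[OF bij] unfolding min_first_classes_on_def by (rule inj_on_subset) auto
  ultimately show "card (min_first_classes_on c (h ` A)) = card (min_first_classes_on c A)"
    by (simp add: card_image)
qed

lemma enumerate_image_lessThan_card:
  fixes S :: "'a::wellorder set"
  assumes "finite S"
  shows "strict_mono_on {..<card S} (enumerate S)" and "enumerate S ` {..<card S} = S"
proof -
  show "strict_mono_on {..<card S} (enumerate S)"
    using assms by (intro strict_mono_onI) (simp add: finite_enumerate_mono)
  show "enumerate S ` {..<card S} = S"
    using assms finite_enumerate_in_set finite_enumerate_Ex by fastforce
qed

lemma card_classes_eq_card_lessThan:
  assumes "finite S"
  shows "card (repl_classes_on c S) = card (repl_classes_on c {..<card S})"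
    and "card (min_first_classes_on c S) = card (min_first_classes_on c {..<card S})"
  using card_classes_strict_mono_image[OF enumerate_image_lessThan_card(1)[OF assms]]
  unfolding enumerate_image_lessThan_card(2)[OF assms] by simp_all

lemma sum_Pow_card:
  fixes f :: "nat \<Rightarrow> 'a::comm_semiring_1"
  assumes "finite B"
  shows "(\<Sum>S\<in>Pow B. f (card S)) = (\<Sum>k\<le>card B. of_nat (card B choose k) * f k)"
proof -
  have "(\<Sum>S\<in>Pow B. f (card S)) = (\<Sum>k\<le>card B. \<Sum>S\<in>{S \<in> Pow B. card S = k}. f (card S))"
    using assms by (intro sum.group[symmetric]) (auto intro: card_mono)
  also have "\<dots> = (\<Sum>k\<le>card B. of_nat (card B choose k) * f k)"
  proof (rule sum.cong[OF refl])
    fix k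
    have "(\<Sum>S\<in>{S \<in> Pow B. card S = k}. f (card S)) = (\<Sum>S\<in>{S. S \<subseteq> B \<and> card S = k}. f k)"
      by (intro sum.cong) auto
    then show "(\<Sum>S\<in>{S \<in> Pow B. card S = k}. f (card S)) = of_nat (card B choose k) * f k"
      using n_subsets[OF assms] by simp
  qed
  finally show ?thesis .
qed

lemma card_repl_classes_on_small:
  assumes "finite A" "card A < c + 1"
  shows "card (repl_classes_on c A) = fact (card A)"
proof -
  have "repl_step_on c A = {}"
    using assms(2) length_finite_permutations_of_set
    by (fastforce simp: repl_step_on_def)
  then have "repl_equiv_on c A = Id_on (permutations_of_set A)"
    unfolding repl_equiv_on_def by simp
  then have "repl_classes_on c A = (\<lambda>x. {x}) ` permutations_of_set A"
    unfolding repl_classes_on_def quotient_def by auto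
  then show ?thesis using assms(1) by (simp add: card_image)
qed

lemma classes_eq_repl_classes_on: "classes c n = repl_classes_on c {1..n}"
  unfolding classes_def repl_classes_on_def repl_equiv_eq_repl_equiv_on perms_eq_permutations_of_set ..

lemma num_classes_eq_card: "num_classes c n = card (repl_classes_on c {..<n})"
  using card_classes_eq_card_lessThan(1)[of "{1..n}"]
  unfolding num_classes_def classes_eq_repl_classes_on by simp

lemma squished_one_iff:
  assumes "\<sigma> \<in> permutations_of_set {1..n}"
  shows "squished c 1 \<sigma> \<longleftrightarrow> std_starts_with_one \<sigma>"
proof (cases \<sigma>)
  case (Cons a \<sigma>')
  have "set \<sigma> = {1..n}" using assms by (simp add: permutations_of_set_def)
  moreover have "a \<in> set \<sigma>" using Cons by simp
  ultimately have "1 \<in> set \<sigma>" "\<forall>x\<in>set \<sigma>. 1 \<le> x" "1 \<le> a" by auto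
  with Cons show ?thesis by (auto simp: squished_def std_starts_with_one_def)
qed (simp add: squished_def std_starts_with_one_def)

lemma num_squished_classes_one_eq_card:
  "num_squished_classes c 1 n = card (min_first_classes_on c {..<n})"
proof -
  have "{C \<in> classes c n. \<exists>\<sigma>\<in>C. squished c 1 \<sigma>} = min_first_classes_on c {1..n}"
    using squished_one_iff in_quotient_imp_subset[OF equiv_repl_equiv_on]
    unfolding classes_eq_repl_classes_on min_first_classes_on_def repl_classes_on_def by blast
  then show ?thesis
    using card_classes_eq_card_lessThan(2)[of "{1..n}"] unfolding num_squished_classes_def by simp
qed

lemma num_classes_recurrence:
  assumes "n \<ge> 1"
  shows "num_classes c n = (\<Sum>j = 1..n. num_classes c (j - 1) * num_squished_classes c 1 (n - j + 1)
                          * ((n - 1) choose (j - 1)))"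
proof -
  define F where "F k = card (repl_classes_on c {..<k})" for k
  define G where "G k = card (min_first_classes_on c {..<k})" for k
  define B where "B = {..<n} - {0}"
  have "num_classes c n = (\<Sum>S\<in>Pow B. card (repl_classes_on c S) * card (min_first_classes_on c ({..<n} - S)))"
    unfolding num_classes_eq_card B_def using assms by (intro card_repl_classes_on_split_at_min) auto
  also have "\<dots> = (\<Sum>S\<in>Pow B. F (card S) * G (n - card S))"
  proof (rule sum.cong[OF refl])
    fix S assume "S \<in> Pow B"
    then have "S \<subseteq> {..<n}" unfolding B_def by auto
    moreover from this have "finite S" by (rule finite_subset) simp
    ultimately have "card ({..<n} - S) = n - card S" by (simp add: card_Diff_subset)
    then show "card (repl_classes_on c S) * card (min_first_classes_on c ({..<n} - S))
        = F (card S) * G (n - card S)"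
      unfolding F_def G_def
      using card_classes_eq_card_lessThan(1)[OF \<open>finite S\<close>]
        card_classes_eq_card_lessThan(2)[of "{..<n} - S"] by simp
  qed
  also have "\<dots> = (\<Sum>k<n. ((n - 1) choose k) * (F k * G (n - k)))"
  proof -
    have "card B = n - 1" "{..card B} = {..<n}" using assms unfolding B_def by auto
    then show ?thesis using sum_Pow_card[of B "\<lambda>k. F k * G (n - k)"] by (simp add: B_def)
  qed
  also have "\<dots> = (\<Sum>j = 1..n. F (j - 1) * G (n - j + 1) * ((n - 1) choose (j - 1)))"
    by (simp add: sum.atLeast1_atMost_eq Suc_diff_Suc mult.commute)
  finally show ?thesis unfolding F_def G_def num_classes_eq_card num_squished_classes_one_eq_card .
qed

theorem theorem3p4:
  fixes c n :: nat
  assumes "c \<ge> 1"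
  shows "num_classes c n =
    (if n < c + 1 then fact n
     else (\<Sum>j = 1..n. num_classes c (j - 1) * num_squished_classes c 1 (n - j + 1)
                          * ((n - 1) choose (j - 1))))"
proof (cases "n < c + 1")
  case True
  then show ?thesis using card_repl_classes_on_small[of "{..<n}" c] by (simp add: num_classes_eq_card)
next
  case False
  then show ?thesis using num_classes_recurrence[of n c] by simp
qed

end
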